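(* Let $A$ be a real matrix with $d_\ell$ columns, $H:=A^\top A$, and suppose $\mu I\preceq H\preceq LI$ for some $0<\mu\le L$. Let $\lambda_s\ge 0$, and for $t=1,\dots,T$ let $b_t$ be vectors (of the row dimension of $A$) and $c_t\in\mathbb{R}^{d_\ell}$. Define $f_t(u)=\frac12\|Au-b_t\|_2^2$, the unanchored minimizer $u_t^\circ:=\arg\min_{u\in\mathbb{R}^{d_\ell}} f_t(u)$ and the anchored minimizer \[ u_t^\star:=\arg\min_{u\in\mathbb{R}^{d_\ell}}\Big\{f_t(u)+\frac{\lambda_s}{2}\|u-c_t\|_2^2\Big\}. \] Then for every $t=2,\dots,T$, \[ \|u_t^\star-u_{t-1}^\star\|_2\le\kappa(\lambda_s)\|u_t^\circ-u_{t-1}^\circ\|_2+\alpha(\lambda_s)\|c_t-c_{t-1}\|_2, \] where \[ \kappa(\lambda_s):=\big\|(H+\lambda_s I)^{-1}H\big\|_{\mathrm{op}}\le\frac{L}{\mu+\lambda_s},\qquad \alpha(\lambda_s):=\big\|\lambda_s(H+\lambda_s I)^{-1}\big\|_{\mathrm{op}}\le\frac{\lambda_s}{\mu+\lambda_s}. \] Consequently, with $V_T^\circ:=\sum_{t=2}^T\|u_t^\circ-u_{t-1}^\circ\|_2$, $V_T^c:=\sum_{t=2}^T\|c_t-c_{t-1}\|_2$ and $V_T^\star:=\sum_{t=2}^T\|u_t^\star-u_{t-1}^\star\|_2$, \[ V_T^\star\le\kappa(\lambda_s)V_T^\circ+\alpha(\lambda_s)V_T^c . \]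
   Context: $\|\cdot\|_2$ is the Euclidean norm, $\|\cdot\|_{\mathrm{op}}$ the operator (spectral) norm, and $\preceq$ the Loewner order on symmetric matrices. *)

theory Defs
  imports "HOL-Analysis.Analysis"
begin

definition loewner_le :: "real^'n^'n \<Rightarrow> real^'n^'n \<Rightarrow> bool" where
  "loewner_le P Q \<longleftrightarrow> (\<forall>x. 0 \<le> x \<bullet> ((Q - P) *v x))"

definition op_norm :: "real^'n^'m \<Rightarrow> real" where
  "op_norm M = onorm (\<lambda>x. M *v x)"

text \<open>The (unique, when it exists) global minimizer of a function.\<close>
definition argmin :: "('a \<Rightarrow> real) \<Rightarrow> 'a" where
  "argmin f = (THE u. \<forall>v. f u \<le> f v)"

end

theory Submission
  imports Defs
begin

(*
  With M = H + lam I, the anchored minimizer solves the normal equation M u = A^T b_t + lam c_t and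
  the unanchored one solves H u = A^T b_t. Writing A^T (b_t - b_(t-1)) = H (uo_t - uo_(t-1)) and
  subtracting gives us_t - us_(t-1) = M^-1 H (uo_t - uo_(t-1)) + lam M^-1 (c_t - c_(t-1)), so the
  stepwise bound is the triangle inequality and the variation bound is its sum. Since
  M \<succeq> (\<mu> + lam) I, Cauchy-Schwarz gives |M^-1| \<le> 1/(\<mu> + lam); and |H| \<le> L because
  (Ay) \<bullet> (Ax) \<le> |Ay| |Ax| with |Az|^2 = z \<bullet> Hz \<le> L |z|^2.
*)

lemma inner_matrix_vector_transpose:
  fixes A :: "real^'n^'m"
  shows "(A *v x) \<bullet> y = x \<bullet> (transpose A *v y)"
  by (metis dot_lmul_matrix inner_commute transpose_matrix_vector)

lemma inner_gram_matrix:
  fixes A :: "real^'n^'m"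
  shows "x \<bullet> ((transpose A ** A) *v z) = (A *v x) \<bullet> (A *v z)"
  by (simp add: inner_matrix_vector_transpose matrix_vector_mul_assoc)

lemma scaleR_mat_1_matrix_vector_mult: "(k *\<^sub>R mat 1) *v x = k *\<^sub>R (x :: real^'n)"
  by (simp flip: scaleR_matrix_vector_assoc)

lemma loewner_le_scaleR_mat_1_left_iff:
  "loewner_le (m *\<^sub>R mat 1) M \<longleftrightarrow> (\<forall>x. m * (norm x)\<^sup>2 \<le> x \<bullet> (M *v x))"
  by (simp add: loewner_le_def matrix_vector_mult_diff_rdistrib scaleR_mat_1_matrix_vector_mult
      inner_diff_right power2_norm_eq_inner)

lemma loewner_le_scaleR_mat_1_right_iff:
  "loewner_le M (L *\<^sub>R mat 1) \<longleftrightarrow> (\<forall>x. x \<bullet> (M *v x) \<le> L * (norm x)\<^sup>2)"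
  by (simp add: loewner_le_def matrix_vector_mult_diff_rdistrib scaleR_mat_1_matrix_vector_mult
      inner_diff_right power2_norm_eq_inner)

lemma loewner_le_add_scaleR_mat_1:
  "loewner_le (m *\<^sub>R mat 1) H \<Longrightarrow> loewner_le ((m + lam) *\<^sub>R mat 1) (H + lam *\<^sub>R mat 1)"
  by (simp add: loewner_le_def scaleR_left_distrib)

lemma loewner_le_imp_norm_mult_ge:
  fixes M :: "real^'n^'n"
  assumes "loewner_le (m *\<^sub>R mat 1) M"
  shows "m * norm x \<le> norm (M *v x)"
proof (cases "x = 0")
  case False
  have "m * norm x * norm x \<le> x \<bullet> (M *v x)"
    using assms by (simp add: loewner_le_scaleR_mat_1_left_iff power2_eq_square mult.assoc)
  also have "\<dots> \<le> norm (M *v x) * norm x"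
    by (metis mult.commute norm_cauchy_schwarz)
  finally show ?thesis
    using False by simp
qed simp

lemma loewner_le_imp_invertible:
  fixes M :: "real^'n^'n"
  assumes "0 < m" and "loewner_le (m *\<^sub>R mat 1) M"
  shows "invertible M"
proof -
  have "x = 0" if "M *v x = 0" for x
    using loewner_le_imp_norm_mult_ge[OF assms(2), of x] that \<open>0 < m\<close>
    by (simp add: zero_less_mult_iff mult_le_0_iff)
  then show ?thesis
    by (simp add: invertible_left_inverse matrix_left_invertible_ker)
qed

lemma matrix_inv_right: "invertible M \<Longrightarrow> M ** matrix_inv M = mat 1"
  unfolding invertible_def matrix_inv_def by (metis (mono_tags, lifting) someI_ex)

lemma loewner_le_imp_norm_matrix_inv_le:
  fixes M :: "real^'n^'n"
  assumes "0 < m" and "loewner_le (m *\<^sub>R mat 1) M"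
  shows "m * norm (matrix_inv M *v y) \<le> norm y"
proof -
  have "M ** matrix_inv M = mat 1"
    using loewner_le_imp_invertible[OF assms] by (rule matrix_inv_right)
  then show ?thesis
    using loewner_le_imp_norm_mult_ge[OF assms(2), of "matrix_inv M *v y"] by (simp add: matrix_vector_mul_assoc)
qed

lemma norm_gram_matrix_mult_le:
  fixes A :: "real^'n^'m"
  assumes "0 \<le> L" and "loewner_le (transpose A ** A) (L *\<^sub>R mat 1)"
  shows "norm ((transpose A ** A) *v x) \<le> L * norm x"
proof -
  define h where "h = (transpose A ** A) *v x"
  have A_le: "norm (A *v z) \<le> sqrt L * norm z" for z
  proof -
    have "(norm (A *v z))\<^sup>2 \<le> (sqrt L * norm z)\<^sup>2"
      using assms by (simp add: loewner_le_scaleR_mat_1_right_iff inner_gram_matrix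
          power_mult_distrib flip: power2_norm_eq_inner)
    then show ?thesis
      using assms(1) by (simp add: power2_le_iff_abs_le)
  qed
  have "norm h * norm h = h \<bullet> ((transpose A ** A) *v x)"
    by (simp add: h_def norm_eq_sqrt_inner)
  also have "\<dots> = (A *v h) \<bullet> (A *v x)"
    by (rule inner_gram_matrix)
  also have "\<dots> \<le> norm (A *v h) * norm (A *v x)"
    by (rule norm_cauchy_schwarz)
  also have "\<dots> \<le> (sqrt L * norm h) * (sqrt L * norm x)"
    using assms(1) by (intro mult_mono A_le) auto
  also have "\<dots> = norm h * (L * norm x)"
    using assms(1) by (simp add: algebra_simps)
  finally show ?thesis
    by (cases "h = 0") (auto simp: h_def assms(1))
qed

lemma op_norm_le: "(\<And>x. norm (M *v x) \<le> k * norm x) \<Longrightarrow> op_norm M \<le> k"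
  unfolding op_norm_def by (rule onorm_le)

lemma norm_le_op_norm: "norm (M *v x) \<le> op_norm M * norm x"
  unfolding op_norm_def by (rule onorm) (rule matrix_vector_mul_bounded_linear)

lemma op_norm_gram_matrix_le:
  fixes A :: "real^'n^'m"
  assumes "0 \<le> L" and "loewner_le (transpose A ** A) (L *\<^sub>R mat 1)"
  shows "op_norm (transpose A ** A) \<le> L"
  using norm_gram_matrix_mult_le[OF assms] by (rule op_norm_le)

lemma op_norm_matrix_inv_mult_le:
  fixes M :: "real^'n^'n" and N :: "real^'k^'n"
  assumes "0 < m" and "loewner_le (m *\<^sub>R mat 1) M"
  shows "op_norm (matrix_inv M ** N) \<le> op_norm N / m"
proof (rule op_norm_le)
  fix x
  have "m * norm ((matrix_inv M ** N) *v x) \<le> norm (N *v x)"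
    using loewner_le_imp_norm_matrix_inv_le[OF assms] by (simp flip: matrix_vector_mul_assoc)
  also have "\<dots> \<le> op_norm N * norm x"
    by (rule norm_le_op_norm)
  finally show "norm ((matrix_inv M ** N) *v x) \<le> op_norm N / m * norm x"
    using \<open>0 < m\<close> by (simp add: field_simps)
qed

lemma op_norm_scaleR_matrix_inv_le:
  fixes M :: "real^'n^'n"
  assumes "0 < m" and "loewner_le (m *\<^sub>R mat 1) M" and "0 \<le> lam"
  shows "op_norm (lam *\<^sub>R matrix_inv M) \<le> lam / m"
proof (rule op_norm_le)
  fix x
  have "m * norm ((lam *\<^sub>R matrix_inv M) *v x) = lam * (m * norm (matrix_inv M *v x))"
    using \<open>0 \<le> lam\<close> by (simp flip: scaleR_matrix_vector_assoc)
  also have "\<dots> \<le> lam * norm x"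
    using loewner_le_imp_norm_matrix_inv_le[OF assms(1,2)] \<open>0 \<le> lam\<close> by (rule mult_left_mono)
  finally show "norm ((lam *\<^sub>R matrix_inv M) *v x) \<le> lam / m * norm x"
    using \<open>0 < m\<close> by (simp add: field_simps)
qed

lemma regularized_least_squares_expansion:
  fixes A :: "real^'n^'m" and lam :: real
  defines "M \<equiv> transpose A ** A + lam *\<^sub>R mat 1"
  assumes "M *v u = transpose A *v b + lam *\<^sub>R c"
  shows "(1/2) * (norm (A *v v - b))\<^sup>2 + (lam/2) * (norm (v - c))\<^sup>2
       = (1/2) * (norm (A *v u - b))\<^sup>2 + (lam/2) * (norm (u - c))\<^sup>2
         + (1/2) * ((v - u) \<bullet> (M *v (v - u)))"
proof -
  define w where "w = v - u"
  have normal: "(A *v w) \<bullet> (A *v u - b) + lam * (w \<bullet> (u - c)) = 0"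
  proof -
    have "(A *v w) \<bullet> (A *v u - b) + lam * (w \<bullet> (u - c)) = w \<bullet> (M *v u - (transpose A *v b + lam *\<^sub>R c))"
      by (simp add: M_def inner_matrix_vector_transpose matrix_vector_mul_assoc scaleR_mat_1_matrix_vector_mult
          matrix_vector_mult_add_rdistrib matrix_vector_mult_diff_distrib inner_diff_right inner_add_right
          right_diff_distrib)
    then show ?thesis
      using assms(2) by simp
  qed
  have "w \<bullet> (M *v w) = (norm (A *v w))\<^sup>2 + lam * (norm w)\<^sup>2"
    by (simp add: M_def matrix_vector_mult_add_rdistrib scaleR_mat_1_matrix_vector_mult inner_add_right
        inner_gram_matrix power2_norm_eq_inner)
  moreover have "v = u + w"
    by (simp add: w_def)
  ultimately show ?thesis
    using normal by (simp add: power2_norm_eq_inner inner_commute algebra_simps)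
qed

lemma argmin_eqI:
  assumes "\<And>v. f u \<le> f v" and "\<And>v. f v \<le> f u \<Longrightarrow> v = u"
  shows "argmin f = u"
  unfolding argmin_def using assms by (intro the_equality) auto

lemma argmin_regularized_least_squares:
  fixes A :: "real^'n^'m" and lam :: real
  defines "M \<equiv> transpose A ** A + lam *\<^sub>R mat 1"
  assumes "0 < m" and "loewner_le (m *\<^sub>R mat 1) M"
  shows "argmin (\<lambda>u. (1/2) * (norm (A *v u - b))\<^sup>2 + (lam/2) * (norm (u - c))\<^sup>2)
       = matrix_inv M *v (transpose A *v b + lam *\<^sub>R c)"
    (is "argmin ?g = ?u")
proof (rule argmin_eqI)
  have "M *v ?u = transpose A *v b + lam *\<^sub>R c"
    using matrix_inv_right[OF loewner_le_imp_invertible[OF assms(2,3)]]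
    by (simp add: matrix_vector_mul_assoc)
  then have expansion: "?g v = ?g ?u + (1/2) * ((v - ?u) \<bullet> (M *v (v - ?u)))" for v
    unfolding M_def by (rule regularized_least_squares_expansion)
  have coercive: "m * (norm (v - ?u))\<^sup>2 \<le> (v - ?u) \<bullet> (M *v (v - ?u))" for v
    using assms(3) by (simp add: loewner_le_scaleR_mat_1_left_iff)
  show "?g ?u \<le> ?g v" for v
    using expansion[of v] coercive[of v] \<open>0 < m\<close> zero_le_power2[of "norm (v - ?u)"]
      mult_nonneg_nonneg[of m "(norm (v - ?u))\<^sup>2"] by linarith
  show "v = ?u" if "?g v \<le> ?g ?u" for v
  proof -
    have "m * (norm (v - ?u))\<^sup>2 \<le> 0"
      using that expansion[of v] coercive[of v] by linarith
    with \<open>0 < m\<close> show ?thesis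
      by (simp add: mult_le_0_iff)
  qed
qed

lemma argmin_regularized_least_squares_diff:
  fixes A :: "real^'n^'m" and lam :: real
  defines "H \<equiv> transpose A ** A"
  defines "M \<equiv> H + lam *\<^sub>R mat 1"
  assumes "0 < m" and "loewner_le (m *\<^sub>R mat 1) H" and "0 \<le> lam"
  shows "argmin (\<lambda>u. (1/2) * (norm (A *v u - b))\<^sup>2 + (lam/2) * (norm (u - c))\<^sup>2)
         - argmin (\<lambda>u. (1/2) * (norm (A *v u - b'))\<^sup>2 + (lam/2) * (norm (u - c'))\<^sup>2)
       = (matrix_inv M ** H) *v
           (argmin (\<lambda>u. (1/2) * (norm (A *v u - b))\<^sup>2) - argmin (\<lambda>u. (1/2) * (norm (A *v u - b'))\<^sup>2))
         + (lam *\<^sub>R matrix_inv M) *v (c - c')"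
proof -
  define uo where "uo b = argmin (\<lambda>u. (1/2) * (norm (A *v u - b))\<^sup>2)" for b
  define us where "us b c = argmin (\<lambda>u. (1/2) * (norm (A *v u - b))\<^sup>2 + (lam/2) * (norm (u - c))\<^sup>2)"
    for b c
  have M_ge: "loewner_le ((m + lam) *\<^sub>R mat 1) M"
    unfolding M_def using assms(4) by (rule loewner_le_add_scaleR_mat_1)
  have uo: "uo b = matrix_inv H *v (transpose A *v b)" for b
    using argmin_regularized_least_squares[of m A 0 b 0] assms(3,4) by (simp add: uo_def H_def)
  have us: "us b c = matrix_inv M *v (transpose A *v b + lam *\<^sub>R c)" for b c
    using argmin_regularized_least_squares[of "m + lam" A lam b c] M_ge assms(3,5)
    by (simp add: us_def M_def H_def)
  have "H ** matrix_inv H = mat 1"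
    using matrix_inv_right loewner_le_imp_invertible[OF assms(3,4)] by blast
  then have "H *v (matrix_inv H *v y) = y" for y
    by (simp add: matrix_vector_mul_assoc)
  then have H_uo_diff: "H *v (uo b - uo b') = transpose A *v b - transpose A *v b'"
    by (simp only: uo matrix_vector_mult_diff_distrib)
  have "us b c - us b' c' = matrix_inv M *v ((transpose A *v b - transpose A *v b') + lam *\<^sub>R (c - c'))"
    by (simp add: us algebra_simps)
  also have "\<dots> = matrix_inv M *v (H *v (uo b - uo b') + lam *\<^sub>R (c - c'))"
    by (simp only: H_uo_diff)
  also have "\<dots> = (matrix_inv M ** H) *v (uo b - uo b') + (lam *\<^sub>R matrix_inv M) *v (c - c')"
    by (simp add: matrix_vector_right_distrib matrix_vector_mult_scaleR
        flip: matrix_vector_mul_assoc scaleR_matrix_vector_assoc)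
  finally show ?thesis
    unfolding us_def uo_def .
qed

theorem propositionC3:
  fixes A :: "real^'n^'m" and \<mu> L lam :: real and T :: nat
    and b :: "nat \<Rightarrow> real^'m" and c :: "nat \<Rightarrow> real^'n"
  defines "H \<equiv> transpose A ** A"
  defines "f \<equiv> (\<lambda>t u. (1/2) * (norm (A *v u - b t))\<^sup>2)"
  defines "uo \<equiv> (\<lambda>t. argmin (f t))"
  defines "us \<equiv> (\<lambda>t. argmin (\<lambda>u. f t u + (lam / 2) * (norm (u - c t))\<^sup>2))"
  defines "\<kappa> \<equiv> op_norm (matrix_inv (H + lam *\<^sub>R mat 1) ** H)"
  defines "\<alpha> \<equiv> op_norm (lam *\<^sub>R matrix_inv (H + lam *\<^sub>R mat 1))"
  assumes "0 < \<mu>" and "\<mu> \<le> L"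
    and "loewner_le (\<mu> *\<^sub>R mat 1) H" and "loewner_le H (L *\<^sub>R mat 1)"
    and "0 \<le> lam"
  shows "(\<forall>t\<in>{2..T}. norm (us t - us (t-1))
            \<le> \<kappa> * norm (uo t - uo (t-1)) + \<alpha> * norm (c t - c (t-1)))
       \<and> \<kappa> \<le> L / (\<mu> + lam) \<and> \<alpha> \<le> lam / (\<mu> + lam)
       \<and> (\<Sum>t=2..T. norm (us t - us (t-1)))
            \<le> \<kappa> * (\<Sum>t=2..T. norm (uo t - uo (t-1))) + \<alpha> * (\<Sum>t=2..T. norm (c t - c (t-1)))"
proof -
  define M where "M = H + lam *\<^sub>R mat 1"
  have "0 < \<mu> + lam"
    using assms by linarith
  have M_ge: "loewner_le ((\<mu> + lam) *\<^sub>R mat 1) M"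
    unfolding M_def using assms(9) by (rule loewner_le_add_scaleR_mat_1)
  have step: "norm (us t - us s) \<le> \<kappa> * norm (uo t - uo s) + \<alpha> * norm (c t - c s)" for t s
  proof -
    have diff: "us t - us s = (matrix_inv M ** H) *v (uo t - uo s) + (lam *\<^sub>R matrix_inv M) *v (c t - c s)"
      unfolding us_def uo_def f_def M_def H_def
      using \<open>0 < \<mu>\<close> assms(9)[unfolded H_def] \<open>0 \<le> lam\<close> by (rule argmin_regularized_least_squares_diff)
    show ?thesis
      unfolding diff \<kappa>_def \<alpha>_def M_def [symmetric] by (intro norm_triangle_le add_mono norm_le_op_norm)
  qed
  have "\<kappa> \<le> op_norm H / (\<mu> + lam)"
    unfolding \<kappa>_def M_def [symmetric] using \<open>0 < \<mu> + lam\<close> M_ge by (rule op_norm_matrix_inv_mult_le)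
  also have "\<dots> \<le> L / (\<mu> + lam)"
    using op_norm_gram_matrix_le[of L A] assms \<open>0 < \<mu> + lam\<close> by (simp add: H_def divide_right_mono)
  finally have \<kappa>_le: "\<kappa> \<le> L / (\<mu> + lam)" .
  have \<alpha>_le: "\<alpha> \<le> lam / (\<mu> + lam)"
    unfolding \<alpha>_def M_def [symmetric] using \<open>0 < \<mu> + lam\<close> M_ge \<open>0 \<le> lam\<close>
    by (rule op_norm_scaleR_matrix_inv_le)
  have "(\<Sum>t=2..T. norm (us t - us (t-1)))
      \<le> (\<Sum>t=2..T. \<kappa> * norm (uo t - uo (t-1)) + \<alpha> * norm (c t - c (t-1)))"
    by (intro sum_mono step)
  then show ?thesis
    using step \<kappa>_le \<alpha>_le by (simp add: sum.distrib sum_distrib_left)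
qed

end
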